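(* Let $f=\sum_{J\in\mathbb{N}^n} a_J x^J$ be a nonzero real polynomial with all coefficients $a_J\in\{0,1\}$, let $\mathcal{M}$ be the set of exponent vectors $P$ with $a_P=1$, and fix an integer $k\ge 0$. Let $M$ be the matrix whose rows are indexed by the vectors $I\in\{0,1\}^n$ with $|I|=k$, whose columns are indexed by the finitely many $J\in\mathbb{N}^n$ such that $I+J\in\mathcal{M}$ for some such $I$, and whose entries are $M_{I,J}=a_{I+J}$. Let $B=M^T M$. Then $$\mathrm{Tr}(B^2)\leq |\mathcal{M}|^2\sum_{P \in \mathcal{M}} \binom{\sup(P)}{k}.$$
   Context: For $\alpha\in\mathbb{N}^n$, $x^\alpha = x_1^{\alpha_1}\cdots x_n^{\alpha_n}/(\alpha_1!\cdots\alpha_n!)$ (scaled monomial basis). For $I\in\{0,1\}^n$, $|I|=\sum_i I_i$. For $P\in\mathbb{N}^n$, $\sup(P)$ is the number of indices $i$ with $P_i>0$. *)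

theory Defs
  imports Complex_Main
begin

text \<open>Exponent vectors in N^n, represented as functions nat => nat vanishing outside {0..<n}.\<close>
definition expvecs :: "nat \<Rightarrow> (nat \<Rightarrow> nat) set" where
  "expvecs n = {P. \<forall>i\<ge>n. P i = 0}"

definition rowidx :: "nat \<Rightarrow> nat \<Rightarrow> (nat \<Rightarrow> nat) set" where
  "rowidx n k = {I \<in> expvecs n. (\<forall>i. I i \<le> 1) \<and> (\<Sum>i<n. I i) = k}"

definition colidx :: "nat \<Rightarrow> nat \<Rightarrow> (nat \<Rightarrow> nat) set \<Rightarrow> (nat \<Rightarrow> nat) set" where
  "colidx n k S = {J \<in> expvecs n. \<exists>I\<in>rowidx n k. (\<lambda>i. I i + J i) \<in> S}"

definition supnum :: "nat \<Rightarrow> (nat \<Rightarrow> nat) \<Rightarrow> nat" where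
  "supnum n P = card {i. i < n \<and> P i > 0}"

definition coef01 :: "(nat \<Rightarrow> nat) set \<Rightarrow> (nat \<Rightarrow> nat) \<Rightarrow> real" where
  "coef01 S J = (if J \<in> S then 1 else 0)"

definition Mmat :: "(nat \<Rightarrow> nat) set \<Rightarrow> (nat \<Rightarrow> nat) \<Rightarrow> (nat \<Rightarrow> nat) \<Rightarrow> real" where
  "Mmat S I J = coef01 S (\<lambda>i. I i + J i)"

definition Bmat :: "nat \<Rightarrow> nat \<Rightarrow> (nat \<Rightarrow> nat) set \<Rightarrow> (nat \<Rightarrow> nat) \<Rightarrow> (nat \<Rightarrow> nat) \<Rightarrow> real" where
  "Bmat n k S J J' = (\<Sum>I\<in>rowidx n k. Mmat S I J * Mmat S I J')"

definition trB2 :: "nat \<Rightarrow> nat \<Rightarrow> (nat \<Rightarrow> nat) set \<Rightarrow> real" where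
  "trB2 n k S = (\<Sum>J\<in>colidx n k S. \<Sum>J'\<in>colidx n k S. Bmat n k S J J' * Bmat n k S J' J)"

end

theory Submission
  imports Defs
begin

text \<open>
  Since M has 0/1 entries, each entry of B = M^T M is at most a column sum of M, and every row
  and column sum of M is at most |S| because translation by a fixed vector is injective. Hence
  Tr(B^2) = sum of B(J,J')^2 <= |S| * sum of B(J,J') = |S| * sum over I of (row sum of I)^2
  <= |S|^2 * sum over I of (row sum of I). The last sum counts the pairs (I, J) with
  I + J = P in S, i.e. the 0/1 vectors I <= P of weight k, of which there are at most
  binom(sup(P), k) for each P.
\<close>

lemma sum_gram_square_le:
  fixes Q :: "'r \<Rightarrow> 'c \<Rightarrow> real" and c :: real
  assumes "finite R" "finite C" "0 \<le> c"
    and Q_nonneg: "\<And>I J. I \<in> R \<Longrightarrow> J \<in> C \<Longrightarrow> 0 \<le> Q I J"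
    and Q_le_1: "\<And>I J. I \<in> R \<Longrightarrow> J \<in> C \<Longrightarrow> Q I J \<le> 1"
    and row_sum_le: "\<And>I. I \<in> R \<Longrightarrow> (\<Sum>J\<in>C. Q I J) \<le> c"
    and col_sum_le: "\<And>J. J \<in> C \<Longrightarrow> (\<Sum>I\<in>R. Q I J) \<le> c"
  shows "(\<Sum>J\<in>C. \<Sum>J'\<in>C. (\<Sum>I\<in>R. Q I J * Q I J') * (\<Sum>I\<in>R. Q I J' * Q I J))
           \<le> c\<^sup>2 * (\<Sum>I\<in>R. \<Sum>J\<in>C. Q I J)"
proof -
  define B where "B J J' = (\<Sum>I\<in>R. Q I J * Q I J')" for J J'
  have B_nonneg: "0 \<le> B J J'" if "J \<in> C" "J' \<in> C" for J J'
    unfolding B_def using that Q_nonneg by (simp add: sum_nonneg)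
  have B_le: "B J J' \<le> c" if "J \<in> C" "J' \<in> C" for J J'
  proof -
    have "B J J' \<le> (\<Sum>I\<in>R. Q I J)"
      unfolding B_def using that Q_nonneg Q_le_1 by (intro sum_mono) (simp add: mult_left_le)
    also have "\<dots> \<le> c" using col_sum_le that(1) .
    finally show ?thesis .
  qed
  have row_sum_nonneg: "0 \<le> (\<Sum>J\<in>C. Q I J)" if "I \<in> R" for I
    using that Q_nonneg by (simp add: sum_nonneg)
  have "(\<Sum>J\<in>C. \<Sum>J'\<in>C. (\<Sum>I\<in>R. Q I J * Q I J') * (\<Sum>I\<in>R. Q I J' * Q I J))
        = (\<Sum>J\<in>C. \<Sum>J'\<in>C. B J J' * B J J')"
    by (simp add: B_def mult.commute)
  also have "\<dots> \<le> (\<Sum>J\<in>C. \<Sum>J'\<in>C. c * B J J')"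
    by (intro sum_mono mult_right_mono B_le B_nonneg)
  also have "\<dots> = c * (\<Sum>J\<in>C. \<Sum>J'\<in>C. \<Sum>I\<in>R. Q I J * Q I J')"
    by (simp add: B_def sum_distrib_left)
  also have "\<dots> = c * (\<Sum>J\<in>C. \<Sum>I\<in>R. \<Sum>J'\<in>C. Q I J * Q I J')"
    by (simp add: sum.swap[of _ C R])
  also have "\<dots> = c * (\<Sum>I\<in>R. \<Sum>J\<in>C. \<Sum>J'\<in>C. Q I J * Q I J')"
    by (subst sum.swap) (rule refl)
  also have "\<dots> = c * (\<Sum>I\<in>R. (\<Sum>J\<in>C. Q I J) * (\<Sum>J'\<in>C. Q I J'))"
    by (simp add: sum_product)
  also have "\<dots> \<le> c * (\<Sum>I\<in>R. c * (\<Sum>J\<in>C. Q I J))"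
    using assms(3) row_sum_le row_sum_nonneg
    by (intro mult_left_mono sum_mono mult_right_mono) auto
  finally show ?thesis by (simp add: power2_eq_square sum_distrib_left mult.assoc)
qed

lemma card_translates_in_le:
  fixes I :: "nat \<Rightarrow> nat"
  assumes "finite S"
  shows "card {J\<in>X. (\<lambda>i. I i + J i) \<in> S} \<le> card S"
  by (rule card_inj_on_le[OF _ _ assms]) (auto simp: inj_on_def fun_eq_iff)

lemma sum_Mmat_col_eq_card:
  "finite X \<Longrightarrow> (\<Sum>J\<in>X. Mmat S I J) = real (card {J\<in>X. (\<lambda>i. I i + J i) \<in> S})"
  by (simp add: Mmat_def coef01_def sum.inter_filter[symmetric])

lemma sum_Mmat_row_eq_card:
  "finite X \<Longrightarrow> (\<Sum>I\<in>X. Mmat S I J) = real (card {I\<in>X. (\<lambda>i. J i + I i) \<in> S})"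
  by (simp add: Mmat_def coef01_def add.commute sum.inter_filter[symmetric])

lemma finite_rowidx: "finite (rowidx n k)"
proof (rule finite_subset)
  show "rowidx n k \<subseteq> {I. \<forall>i. (i \<in> {..<n} \<longrightarrow> I i \<in> {0, 1}) \<and> (i \<notin> {..<n} \<longrightarrow> I i = 0)}"
    by (auto simp: rowidx_def expvecs_def le_Suc_eq)
qed (intro finite_set_of_finite_funs; simp)

lemma colidx_subset_differences:
  "colidx n k S \<subseteq> (\<lambda>(I, P). \<lambda>i. P i - I i) ` (rowidx n k \<times> S)"
proof
  fix J assume "J \<in> colidx n k S"
  then obtain I where "I \<in> rowidx n k" "(\<lambda>i. I i + J i) \<in> S" by (auto simp: colidx_def)
  moreover have "J = (\<lambda>i. (I i + J i) - I i)" by simp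
  ultimately show "J \<in> (\<lambda>(I, P). \<lambda>i. P i - I i) ` (rowidx n k \<times> S)" by force
qed

lemma finite_colidx: "finite S \<Longrightarrow> finite (colidx n k S)"
  by (rule finite_subset[OF colidx_subset_differences])
     (intro finite_imageI finite_cartesian_product finite_rowidx)

lemma sum_le_1_eq_card:
  fixes f :: "'a \<Rightarrow> nat"
  assumes "finite A" "\<And>i. f i \<le> 1"
  shows "(\<Sum>i\<in>A. f i) = card {i\<in>A. f i = 1}"
proof -
  have "f i = (if f i = 1 then 1 else 0)" for i
    using assms(2)[of i] by (cases "f i = 1") auto
  then have "(\<Sum>i\<in>A. f i) = (\<Sum>i\<in>A. if f i = 1 then 1 else 0)"
    by (rule sum.cong[OF refl])
  also have "\<dots> = card {i\<in>A. f i = 1}"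
    using assms(1) by (simp add: sum.If_cases Int_def)
  finally show ?thesis .
qed

lemma card_rowidx_below_le:
  "card {I\<in>rowidx n k. \<forall>i. I i \<le> P i} \<le> supnum n P choose k"
proof -
  let ?A = "{i. i < n \<and> 0 < P i}"
  let ?ones = "\<lambda>I. {i. i < n \<and> I i = 1}"
  have "finite ?A" by simp
  have "inj_on ?ones (rowidx n k)"
  proof (rule inj_onI, rule ext)
    fix I I' i assume I: "I \<in> rowidx n k" and I': "I' \<in> rowidx n k" and "?ones I = ?ones I'"
    show "I i = I' i"
    proof (cases "i < n")
      case True
      then have "I i = 1 \<longleftrightarrow> I' i = 1" using \<open>?ones I = ?ones I'\<close> by blast
      moreover have "I i \<le> 1" "I' i \<le> 1" using I I' by (simp_all add: rowidx_def)
      ultimately show ?thesis by linarith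
    next
      case False
      then show ?thesis using I I' by (simp add: rowidx_def expvecs_def)
    qed
  qed
  moreover have "?ones I \<in> {B. B \<subseteq> ?A \<and> card B = k}"
    if I: "I \<in> rowidx n k" "\<forall>i. I i \<le> P i" for I
  proof -
    have "?ones I \<subseteq> ?A"
    proof clarify
      fix i assume "i < n" "I i = 1"
      moreover have "I i \<le> P i" using I(2) by blast
      ultimately show "0 < P i" by simp
    qed
    moreover have "k = (\<Sum>i<n. I i)" using I(1) by (simp add: rowidx_def)
    moreover have "\<dots> = card {i\<in>{..<n}. I i = 1}"
      using I(1) by (intro sum_le_1_eq_card) (simp_all add: rowidx_def)
    moreover have "{i\<in>{..<n}. I i = 1} = ?ones I" by auto
    ultimately show ?thesis by simp
  qed
  ultimately have "card {I\<in>rowidx n k. \<forall>i. I i \<le> P i} \<le> card {B. B \<subseteq> ?A \<and> card B = k}"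
    using \<open>finite ?A\<close> by (intro card_inj_on_le[where f = ?ones]) (auto intro: inj_on_subset)
  also have "\<dots> = supnum n P choose k"
    using n_subsets[OF \<open>finite ?A\<close>] by (simp add: supnum_def)
  finally show ?thesis .
qed

lemma card_translate_pairs_le:
  fixes R C S :: "(nat \<Rightarrow> nat) set"
  assumes "finite R" "finite S"
  shows "card (SIGMA I:R. {J\<in>C. (\<lambda>i. I i + J i) \<in> S})
           \<le> (\<Sum>P\<in>S. card {I\<in>R. \<forall>i. I i \<le> P i})"
proof -
  have "card (SIGMA I:R. {J\<in>C. (\<lambda>i. I i + J i) \<in> S}) \<le> card (SIGMA P:S. {I\<in>R. \<forall>i. I i \<le> P i})"
    using assms
    by (intro card_inj_on_le[where f = "\<lambda>(I, J). ((\<lambda>i. I i + J i), I)"])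
       (auto simp: inj_on_def fun_eq_iff)
  also have "\<dots> = (\<Sum>P\<in>S. card {I\<in>R. \<forall>i. I i \<le> P i})"
    using assms by (simp add: card_SigmaI)
  finally show ?thesis .
qed

theorem lemma3:
  fixes n k :: nat and S :: "(nat \<Rightarrow> nat) set"
  assumes "finite S" and "S \<noteq> {}" and "S \<subseteq> expvecs n"
  shows "trB2 n k S \<le> real (card S) ^ 2 * (\<Sum>P\<in>S. real (supnum n P choose k))"
proof -
  let ?R = "rowidx n k" and ?C = "colidx n k S"
  have fin: "finite ?R" "finite ?C" using finite_rowidx finite_colidx assms(1) by auto
  have mass: "(\<Sum>I\<in>?R. \<Sum>J\<in>?C. Mmat S I J) \<le> (\<Sum>P\<in>S. real (supnum n P choose k))"
  proof -
    have "(\<Sum>I\<in>?R. \<Sum>J\<in>?C. Mmat S I J) = card (SIGMA I:?R. {J\<in>?C. (\<lambda>i. I i + J i) \<in> S})"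
      using fin by (simp add: sum_Mmat_col_eq_card card_SigmaI)
    also have "\<dots> \<le> real (\<Sum>P\<in>S. supnum n P choose k)"
      unfolding of_nat_le_iff
      using card_translate_pairs_le[OF fin(1) assms(1)] card_rowidx_below_le
      by (rule order_trans[OF _ sum_mono])
    finally show ?thesis by simp
  qed
  have "trB2 n k S \<le> real (card S) ^ 2 * (\<Sum>I\<in>?R. \<Sum>J\<in>?C. Mmat S I J)"
    unfolding trB2_def Bmat_def
  proof (rule sum_gram_square_le)
    show "(\<Sum>J\<in>?C. Mmat S I J) \<le> real (card S)" for I
      using card_translates_in_le[OF assms(1)] by (simp add: sum_Mmat_col_eq_card[OF fin(2)])
    show "(\<Sum>I\<in>?R. Mmat S I J) \<le> real (card S)" for J
      using card_translates_in_le[OF assms(1)] by (simp add: sum_Mmat_row_eq_card[OF fin(1)])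
  qed (simp_all add: fin Mmat_def coef01_def)
  also have "\<dots> \<le> real (card S) ^ 2 * (\<Sum>P\<in>S. real (supnum n P choose k))"
    using mass by (rule mult_left_mono) simp
  finally show ?thesis .
qed

end
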